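(* Fix $k\ge2$ and assume $\mathbb{E} Z<\infty$. Let $L_\infty=\inf_{n\in\mathbb{N}}L_n$ in the $k$-choice model. Then $L_\infty$ is finite almost surely, and consequently the sequences $(R_n)_{n\ge1}$, $(L_n)_{n\ge1}$, $(\Lambda_n)_{n\ge1}$ are almost surely bounded.
   Context: Let $Z$ be a random variable on $\mathbb{N}=\{1,2,3,\dots\}$. Fix $k\ge2$ and let $(Z^{(1)}_n)_{n\ge1},\dots,(Z^{(k)}_n)_{n\ge1}$ be $k$ independent sequences of i.i.d. random variables, all distributed as $Z$ and mutually independent. The $k$-choice model: define $T_n=\{n\}$ for $n\le0$ and $T_n=\{n\}\cup\bigcup_{i=1}^k T_{n-Z^{(i)}_n}$ for $n\ge1$. Let $\mathcal{L}_n=T_n\cap\{0,-1,-2,\dots\}$, $R_n=\max\mathcal{L}_n$, $L_n=\min\mathcal{L}_n$, $\Lambda_n=|\mathcal{L}_n|$. *)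

theory Defs
  imports "HOL-Probability.Probability"
begin

text \<open>The k-choice tree.  z i m is the value Z^(i)_m (only m \<ge> 1 and i < k are used).
  T_n is the smallest set containing n and, with every positive element m, all
  points m - Z^(i)_m for i < k; this is exactly the unfolding of the recursion
  T_n = {n} for n \<le> 0 and T_n = {n} \<union> \<Union>_i T_(n - Z^(i)_n) for n \<ge> 1.\<close>

inductive_set kTree :: "nat \<Rightarrow> (nat \<Rightarrow> nat \<Rightarrow> nat) \<Rightarrow> int \<Rightarrow> int set"
  for k :: nat and z :: "nat \<Rightarrow> nat \<Rightarrow> nat" and n :: int where
  root: "n \<in> kTree k z n"
| step: "m \<in> kTree k z n \<Longrightarrow> m \<ge> 1 \<Longrightarrow> i < k \<Longrightarrow> m - int (z i (nat m)) \<in> kTree k z n"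

definition kLeaves :: "nat \<Rightarrow> (nat \<Rightarrow> nat \<Rightarrow> nat) \<Rightarrow> int \<Rightarrow> int set" where
  "kLeaves k z n = kTree k z n \<inter> {..0}"

definition kR :: "nat \<Rightarrow> (nat \<Rightarrow> nat \<Rightarrow> nat) \<Rightarrow> int \<Rightarrow> int" where
  "kR k z n = Max (kLeaves k z n)"

definition kL :: "nat \<Rightarrow> (nat \<Rightarrow> nat \<Rightarrow> nat) \<Rightarrow> int \<Rightarrow> int" where
  "kL k z n = Min (kLeaves k z n)"

definition kLambda :: "nat \<Rightarrow> (nat \<Rightarrow> nat \<Rightarrow> nat) \<Rightarrow> int \<Rightarrow> nat" where
  "kLambda k z n = card (kLeaves k z n)"

end

theory Submission
  imports Defs
begin

text \<open>Since \<open>\<Sum>\<^sub>m P(Z > m) \<le> E Z < \<infinity>\<close>, the first Borel-Cantelli lemma shows that almost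
  surely each of the \<open>k\<close> sequences satisfies \<open>Z\<^sub>m \<le> m\<close> for all but finitely many \<open>m\<close>, so there is
  a random \<open>B < \<infinity>\<close> with \<open>Z\<^sub>m \<le> m + B\<close> for all of them. A jump from a node \<open>m \<ge> 1\<close> then lands
  at \<open>m - Z\<^sub>m \<ge> -B\<close>, so the leaves of every tree \<open>T\<^sub>n\<close> lie in \<open>[-B, 0]\<close>, which bounds \<open>R\<^sub>n\<close>,
  \<open>L\<^sub>n\<close> and \<open>\<Lambda>\<^sub>n \<le> B + 1\<close> uniformly in \<open>n\<close>.\<close>

lemma summable_tail_prob_nat_pmf:
  fixes p :: "nat pmf"
  assumes "integrable (measure_pmf p) real"
  shows "summable (\<lambda>m. measure_pmf.prob p {m<..})"
proof (rule bounded_imp_summable)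
  fix n
  have "(\<Sum>m\<le>n. measure_pmf.prob p {m<..})
      = measure_pmf.expectation p (\<lambda>x. \<Sum>m\<le>n. indicator {m<..} x)"
    by (simp add: Bochner_Integration.integral_sum measure_pmf.integrable_const_bound[where B=1])
  also have "\<dots> \<le> measure_pmf.expectation p real"
  proof (rule integral_mono)
    show "integrable (measure_pmf p) (\<lambda>x. \<Sum>m\<le>n. indicator {m<..} x :: real)"
      by (intro measure_pmf.integrable_const_bound[where B="real (Suc n)"] AE_I2)
         (auto simp: abs_of_nonneg sum_nonneg intro!: order.trans[OF sum_bounded_above[where K=1]])
    fix x :: nat
    have "(\<Sum>m\<le>n. indicator {m<..} x :: real) = real (card {m. m \<le> n \<and> m < x})"
      by (simp add: indicator_def sum.If_cases Collect_conj_eq atMost_def Int_commute)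
    also have "\<dots> \<le> real (card {..<x})"
      by (intro of_nat_mono card_mono) auto
    finally show "(\<Sum>m\<le>n. indicator {m<..} x :: real) \<le> real x"
      by simp
  qed fact
  finally show "(\<Sum>m\<le>n. measure_pmf.prob p {m<..}) \<le> measure_pmf.expectation p real" .
qed simp

lemma AE_eventually_le_index:
  fixes X :: "nat \<Rightarrow> 'a \<Rightarrow> nat" and p :: "nat pmf"
  assumes "prob_space M"
    and "integrable (measure_pmf p) real"
    and meas: "\<And>n. X n \<in> measurable M (count_space UNIV)"
    and distr: "\<And>n. n \<ge> 1 \<Longrightarrow> distr M (count_space UNIV) (X n) = measure_pmf p"
  shows "AE \<omega> in M. eventually (\<lambda>m. X m \<omega> \<le> m) sequentially"
proof -
  interpret prob_space M by fact
  define A where "A m = X (Suc m) -` {Suc m<..} \<inter> space M" for m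
  have A_sets: "A m \<in> sets M" for m
    unfolding A_def by (rule measurable_sets[OF meas]) auto
  have "measure M (A m) = measure_pmf.prob p {Suc m<..}" for m
    using measure_distr[OF meas, of "{Suc m<..}" "Suc m"] distr[of "Suc m"] by (simp add: A_def)
  moreover have "summable (\<lambda>m. measure_pmf.prob p {Suc m<..})"
    using summable_tail_prob_nat_pmf[OF assms(2)] by (rule summable_Suc_iff[THEN iffD2])
  ultimately have "AE \<omega> in M. eventually (\<lambda>m. \<omega> \<in> space M - A m) sequentially"
    by (intro borel_cantelli_AE1) (auto simp: A_sets emeasure_eq_measure)
  then have "AE \<omega> in M. eventually (\<lambda>m. X (Suc m) \<omega> \<le> Suc m) sequentially"
    by (rule AE_mp) (auto simp: A_def not_less elim: eventually_mono)
  then show ?thesis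
    by (simp only: eventually_sequentially_Suc[where P="\<lambda>m. X m _ \<le> m"])
qed

lemma eventually_le_index_imp_uniform_bound:
  fixes z :: "nat \<Rightarrow> nat \<Rightarrow> nat"
  assumes "\<forall>i<k. eventually (\<lambda>m. z i m \<le> m) sequentially"
  shows "\<exists>B. \<forall>i<k. \<forall>m. z i m \<le> m + B"
proof -
  have "eventually (\<lambda>m. \<forall>i\<in>{..<k}. z i m \<le> m) sequentially"
    using assms by (intro eventually_ball_finite) auto
  then obtain N where N: "\<And>i m. m \<ge> N \<Longrightarrow> i < k \<Longrightarrow> z i m \<le> m"
    by (auto simp: eventually_sequentially)
  define B where "B = (\<Sum>(i, m)\<in>{..<k} \<times> {..<N}. z i m)"
  have "z i m \<le> m + B" if "i < k" for i m
  proof (cases "m < N")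
    case True
    then have "z i m \<le> B"
      unfolding B_def using that member_le_sum[of "(i, m)" "{..<k} \<times> {..<N}" "case_prod z"]
      by auto
    then show ?thesis by simp
  qed (use N[of m i] that in simp)
  then show ?thesis by blast
qed

lemma kTree_lower_bound:
  assumes jumps: "\<And>i m. i < k \<Longrightarrow> m \<ge> 1 \<Longrightarrow> z i m \<le> m + B"
    and "- int B \<le> n" and "x \<in> kTree k z n"
  shows "- int B \<le> x"
  using assms(3)
proof induction
  case (step m i)
  then have "z i (nat m) \<le> nat m + B"
    using jumps[of i "nat m"] by auto
  then show ?case using step by auto
qed (use assms(2) in simp)

lemma kLeaves_subset:
  assumes "\<And>i m. i < k \<Longrightarrow> m \<ge> 1 \<Longrightarrow> z i m \<le> m + B" and "- int B \<le> n"
  shows "kLeaves k z n \<subseteq> {- int B..0}"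
  using kTree_lower_bound[OF assms] by (auto simp: kLeaves_def)

text \<open>\<open>Min {}\<close> and \<open>Max {}\<close> are unspecified values; they only matter for an empty leaf set.\<close>

lemma Min_in_insert_Min_empty: "finite A \<Longrightarrow> Min A \<in> insert (Min {}) A"
  by (cases "A = {}") auto

lemma Max_in_insert_Max_empty: "finite A \<Longrightarrow> Max A \<in> insert (Max {}) A"
  by (cases "A = {}") auto

lemma kL_mem:
  assumes "\<And>i m. i < k \<Longrightarrow> m \<ge> 1 \<Longrightarrow> z i m \<le> m + B" and "- int B \<le> n"
  shows "kL k z n \<in> insert (Min {}) {- int B..0}"
proof -
  have leaves: "kLeaves k z n \<subseteq> {- int B..0}"
    by (rule kLeaves_subset[OF assms])
  then have "finite (kLeaves k z n)"
    by (rule finite_subset) simp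
  then show ?thesis
    using Min_in_insert_Min_empty leaves unfolding kL_def by blast
qed

lemma kR_mem:
  assumes "\<And>i m. i < k \<Longrightarrow> m \<ge> 1 \<Longrightarrow> z i m \<le> m + B" and "- int B \<le> n"
  shows "kR k z n \<in> insert (Max {}) {- int B..0}"
proof -
  have leaves: "kLeaves k z n \<subseteq> {- int B..0}"
    by (rule kLeaves_subset[OF assms])
  then have "finite (kLeaves k z n)"
    by (rule finite_subset) simp
  then show ?thesis
    using Max_in_insert_Max_empty leaves unfolding kR_def by blast
qed

lemma kLambda_le:
  assumes "\<And>i m. i < k \<Longrightarrow> m \<ge> 1 \<Longrightarrow> z i m \<le> m + B" and "- int B \<le> n"
  shows "kLambda k z n \<le> B + 1"
proof -
  have "kLambda k z n \<le> card {- int B..0}"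
    unfolding kLambda_def by (rule card_mono[OF _ kLeaves_subset[OF assms]]) simp
  then show ?thesis by simp
qed

lemma kChoice_statistics_bounded:
  assumes B: "\<And>i m. i < k \<Longrightarrow> m \<ge> 1 \<Longrightarrow> z i m \<le> m + B"
  shows "bdd_below ((\<lambda>n. kL k z (int n)) ` {1..})
    \<and> bounded (range (\<lambda>n::nat. real_of_int (kR k z (int (Suc n)))))
    \<and> bounded (range (\<lambda>n::nat. real_of_int (kL k z (int (Suc n)))))
    \<and> bounded (range (\<lambda>n::nat. real (kLambda k z (int (Suc n)))))"
proof -
  define Lset where "Lset = insert (Min {}) {- int B..0}"
  define Rset where "Rset = insert (Max {}) {- int B..0}"
  have kL: "kL k z (int n) \<in> Lset" for n
    unfolding Lset_def by (rule kL_mem) (use B in auto)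
  have kR: "kR k z (int n) \<in> Rset" for n
    unfolding Rset_def by (rule kR_mem) (use B in auto)
  have "finite Lset" "finite Rset"
    by (simp_all add: Lset_def Rset_def)
  have kLambda: "kLambda k z (int n) \<in> {..B + 1}" for n
    using kLambda_le[of k z B "int n"] B by simp
  have "bdd_below ((\<lambda>n. kL k z (int n)) ` {1..})"
    by (rule bdd_below_mono[OF bdd_below_finite, of Lset]) (use kL \<open>finite Lset\<close> in auto)
  moreover have "bounded (range (\<lambda>n::nat. real_of_int (kR k z (int (Suc n)))))"
    by (rule bounded_subset[OF finite_imp_bounded, of "real_of_int ` Rset"])
      (use kR \<open>finite Rset\<close> in \<open>auto simp del: of_nat_Suc\<close>)
  moreover have "bounded (range (\<lambda>n::nat. real_of_int (kL k z (int (Suc n)))))"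
    by (rule bounded_subset[OF finite_imp_bounded, of "real_of_int ` Lset"])
      (use kL \<open>finite Lset\<close> in \<open>auto simp del: of_nat_Suc\<close>)
  moreover have "bounded (range (\<lambda>n::nat. real (kLambda k z (int (Suc n)))))"
    by (rule bounded_subset[OF finite_imp_bounded, of "real ` {..B + 1}"])
      (use kLambda in \<open>auto simp del: of_nat_Suc\<close>)
  ultimately show ?thesis
    by blast
qed

theorem mainTheorem14:
  fixes M :: "'a measure" and k :: nat and p :: "nat pmf"
    and Z :: "nat \<Rightarrow> nat \<Rightarrow> 'a \<Rightarrow> nat"
  assumes "prob_space M"
    and "k \<ge> 2"
    and "set_pmf p \<subseteq> {1..}"
    and "integrable (measure_pmf p) real"
    and "\<And>i n. Z i n \<in> measurable M (count_space UNIV)"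
    and "prob_space.indep_vars M (\<lambda>_. count_space UNIV) (\<lambda>(i, n). Z i n) ({..<k} \<times> {1..})"
    and "\<And>i n. i < k \<Longrightarrow> n \<ge> 1 \<Longrightarrow> distr M (count_space UNIV) (Z i n) = measure_pmf p"
  shows "AE \<omega> in M.
           bdd_below ((\<lambda>n. kL k (\<lambda>i m. Z i m \<omega>) (int n)) ` {1..})
         \<and> bounded (range (\<lambda>n::nat. real_of_int (kR k (\<lambda>i m. Z i m \<omega>) (int (Suc n)))))
         \<and> bounded (range (\<lambda>n::nat. real_of_int (kL k (\<lambda>i m. Z i m \<omega>) (int (Suc n)))))
         \<and> bounded (range (\<lambda>n::nat. real (kLambda k (\<lambda>i m. Z i m \<omega>) (int (Suc n)))))"
proof -
  have "AE \<omega> in M. \<forall>i<k. eventually (\<lambda>m. Z i m \<omega> \<le> m) sequentially"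
    using AE_eventually_le_index[OF assms(1,4,5) assms(7)] by (subst AE_all_countable) auto
  then have "AE \<omega> in M. \<exists>B. \<forall>i<k. \<forall>m. Z i m \<omega> \<le> m + B"
    by (rule eventually_mono) (rule eventually_le_index_imp_uniform_bound)
  then show ?thesis
    by (rule eventually_mono) (elim exE, rule kChoice_statistics_bounded, blast)
qed

end
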